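(* Let $\mathcal{X} \subseteq \mathbb{R}^m$ be countable and let $\widehat\nu = \sum_{j=1}^N \widehat\nu_j \delta_{\widehat x_j}$ be a probability mass function supported on $N$ distinct points $\widehat x_1,\dots,\widehat x_N \in \mathcal{X}$ with $\widehat\nu_j > 0$ and $\sum_j \widehat\nu_j = 1$. For $\varepsilon \ge 0$ let $\mathbb{B}_{\mathrm{KL}}(\widehat\nu,\varepsilon) = \{\nu \in \mathcal{M}(\mathcal{X}) : \mathrm{KL}(\widehat\nu \parallel \nu) \le \varepsilon\}$. Then for any $\varepsilon \ge 0$ and $x \in \mathcal{X}$: (i) if $x \in \mathrm{supp}(\widehat\nu)$, then $$\sup_{\nu \in \mathbb{B}_{\mathrm{KL}}(\widehat\nu,\varepsilon)} \nu(x) = \max\Big\{ \sum_{j=1}^N y_j \mathbb{1}_x(\widehat x_j) : y \in \mathbb{R}^N_{++},\ \sum_{j=1}^N \widehat\nu_j \log(\widehat\nu_j / y_j) \le \varepsilon,\ e^\top y = 1 \Big\},$$ which is a finite convex optimization problem, where $e$ is the all-ones vector; (ii) if $x \notin \mathrm{supp}(\widehat\nu)$, then $\sup_{\nu \in \mathbb{B}_{\mathrm{KL}}(\widehat\nu,\varepsilon)} \nu(x) = 1 - \exp(-\varepsilon)$.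
   Context: $\mathcal{M}(\mathcal{X})$ is the set of probability mass functions supported on $\mathcal{X}$; $\delta_z$ is the Dirac measure at $z$; $\mathbb{R}^N_{++}$ is the set of vectors with strictly positive entries; $\mathbb{1}_x(\xi) = 1$ if $\xi = x$ and $0$ otherwise. For $\nu_1 \ll \nu_2$, $\mathrm{KL}(\nu_1 \parallel \nu_2) = \sum_{z \in \mathcal{X}} f(\nu_1(z)/\nu_2(z))\,\nu_2(z)$ with $f(t) = t\log t - t + 1$. *)

theory Defs
  imports "HOL-Analysis.Analysis" "HOL-Probability.Probability"
begin

text \<open>The convex function f(t) = t log t - t + 1 (with 0 log 0 = 0).\<close>
definition kl_f :: "real \<Rightarrow> real" where
  "kl_f t = t * ln t - t + 1"

definition pmfs_on :: "'a set \<Rightarrow> 'a pmf set" where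
  "pmfs_on X = {\<nu>. set_pmf \<nu> \<subseteq> X}"

definition KL :: "'a set \<Rightarrow> 'a pmf \<Rightarrow> 'a pmf \<Rightarrow> ennreal" where
  "KL X \<nu>1 \<nu>2 =
     (if set_pmf \<nu>1 \<subseteq> set_pmf \<nu>2
      then (\<integral>\<^sup>+ z. ennreal (kl_f (pmf \<nu>1 z / pmf \<nu>2 z) * pmf \<nu>2 z) \<partial>count_space X)
      else \<infinity>)"

definition KL_ball :: "'a set \<Rightarrow> 'a pmf \<Rightarrow> real \<Rightarrow> 'a pmf set" where
  "KL_ball X \<nu>h \<epsilon> = {\<nu> \<in> pmfs_on X. KL X \<nu>h \<nu> \<le> ennreal \<epsilon>}"

end

(* A pmf nu in the KL ball must charge every atom xh j, and its mass off the atoms contributes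
   exactly 1 - (sum_j nu (xh j)) to the divergence, cancelling the linear terms of kl_f; hence
   KL(nuh || nu) = sum_j w_j ln (w_j / nu (xh j)).

   (i) Rescaling (nu (xh j))_j to a probability vector lowers this sum and does not decrease the
   k-th entry, while every feasible probability vector y is itself a pmf in the ball; so the
   supremum is the finite maximum. That maximum is attained: merging all atoms other than k
   (log-sum inequality) shows that a feasible y satisfies binary_KL (w k) (y k) <= eps, and
   conversely any such t is the k-th entry of the feasible vector that spreads 1 - t over the
   other atoms proportionally to w. The set of these t is closed in (0,1), contains w k and stays
   away from 1, where binary_KL blows up.

   (ii) If x is not an atom, the log-sum inequality gives -ln (sum_j nu (xh j)) <= eps, hence
   nu x <= 1 - (sum_j nu (xh j)) <= 1 - exp (-eps), with equality for the mixture
   exp (-eps) nuh + (1 - exp (-eps)) delta_x. *)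

theory Submission
  imports Defs
begin

lemma sum_if_inj_on_eq:
  assumes "inj_on f {..<(n::nat)}" "j < n"
  shows "(\<Sum>i<n. if f i = f j then a i else (0::'b::comm_monoid_add)) = a j"
proof -
  have "(\<Sum>i<n. if f i = f j then a i else 0) = (\<Sum>i\<in>{j}. a i)"
    by (rule sum.mono_neutral_cong_right) (use assms in \<open>auto simp: inj_on_def\<close>)
  then show ?thesis by simp
qed

lemma log_sum_inequality:
  fixes w y :: "'a \<Rightarrow> real"
  assumes "finite J" and w: "\<And>j. j \<in> J \<Longrightarrow> w j > 0" and y: "\<And>j. j \<in> J \<Longrightarrow> y j > 0"
  shows "(\<Sum>j\<in>J. w j) * ln ((\<Sum>j\<in>J. w j) / (\<Sum>j\<in>J. y j)) \<le> (\<Sum>j\<in>J. w j * ln (w j / y j))"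
proof (cases "J = {}")
  case False
  define W where "W = (\<Sum>j\<in>J. w j)"
  define Y where "Y = (\<Sum>j\<in>J. y j)"
  have "W > 0" "Y > 0"
    unfolding W_def Y_def using assms False by (auto intro: sum_pos)
  have "w j - y j * W / Y \<le> w j * ln (w j / y j) - w j * ln (W / Y)" if "j \<in> J" for j
  proof -
    have "w j > 0" "y j > 0" using w y that by auto
    have "ln (y j * W / (w j * Y)) \<le> y j * W / (w j * Y) - 1"
      using \<open>w j > 0\<close> \<open>y j > 0\<close> \<open>W > 0\<close> \<open>Y > 0\<close> by (intro ln_le_minus_one) simp
    also have "ln (y j * W / (w j * Y)) = ln (W / Y) - ln (w j / y j)"
      using \<open>w j > 0\<close> \<open>y j > 0\<close> \<open>W > 0\<close> \<open>Y > 0\<close> by (simp add: ln_div ln_mult)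
    finally have "1 - y j * W / (w j * Y) \<le> ln (w j / y j) - ln (W / Y)" by linarith
    from mult_left_mono[OF this less_imp_le[OF \<open>w j > 0\<close>]]
    show ?thesis using \<open>w j > 0\<close> by (simp add: algebra_simps)
  qed
  then have "(\<Sum>j\<in>J. w j - y j * W / Y) \<le> (\<Sum>j\<in>J. w j * ln (w j / y j) - w j * ln (W / Y))"
    by (rule sum_mono)
  moreover have "(\<Sum>j\<in>J. w j - y j * W / Y) = 0"
    using \<open>Y > 0\<close> by (simp add: sum_subtractf sum_divide_distrib[symmetric]
        sum_distrib_right[symmetric] W_def Y_def)
  ultimately show ?thesis
    by (simp add: sum_subtractf sum_distrib_right W_def Y_def)
qed simp

lemma sum_pmf_le_1: "finite A \<Longrightarrow> sum (pmf p) A \<le> 1"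
  using measure_measure_pmf_finite[of A p] measure_pmf.prob_le_1[of p A] by simp

lemma ex_pmf_finite_support:
  fixes q :: "'a \<Rightarrow> real"
  assumes "finite A" "\<And>z. z \<in> A \<Longrightarrow> q z \<ge> 0" "sum q A = 1"
  shows "\<exists>p. set_pmf p \<subseteq> A \<and> (\<forall>z\<in>A. pmf p z = q z)"
proof -
  define f where "f = (\<lambda>z. if z \<in> A then q z else 0)"
  have f_nonneg: "\<And>z. 0 \<le> f z" using assms(2) by (simp add: f_def)
  have "(\<integral>\<^sup>+z. ennreal (f z) \<partial>count_space UNIV) = (\<Sum>z\<in>A. ennreal (f z))"
    by (rule nn_integral_count_space') (use assms in \<open>auto simp: f_def\<close>)
  also have "\<dots> = ennreal (\<Sum>z\<in>A. f z)" using f_nonneg by (simp add: sum_ennreal)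
  also have "\<dots> = 1" using assms(3) by (simp add: f_def)
  finally have "(\<integral>\<^sup>+z. ennreal (f z) \<partial>count_space UNIV) = 1" .
  from pmf_embed_pmf[OF f_nonneg this] set_embed_pmf[OF f_nonneg this] show ?thesis
    by (intro exI[of _ "embed_pmf f"]) (auto simp: f_def)
qed

lemma kl_f_nonneg: "t \<ge> 0 \<Longrightarrow> kl_f t \<ge> 0"
proof (cases "t = 0")
  case False
  assume "t \<ge> 0"
  then have "t > 0" using False by simp
  have "ln (1 / t) \<le> 1 / t - 1" using \<open>t > 0\<close> by (intro ln_le_minus_one) simp
  then have "- ln t \<le> 1 / t - 1" using \<open>t > 0\<close> by (simp add: ln_div)
  from mult_left_mono[OF this less_imp_le[OF \<open>t > 0\<close>]]
  show ?thesis using \<open>t > 0\<close> by (simp add: kl_f_def algebra_simps)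
qed (simp add: kl_f_def)

lemma KL_eq_sum_ln:
  assumes fin: "finite (set_pmf p)" and sub: "set_pmf p \<subseteq> set_pmf q" and X: "set_pmf q \<subseteq> X"
  shows "KL X p q = ennreal (\<Sum>z\<in>set_pmf p. pmf p z * ln (pmf p z / pmf q z))"
proof -
  define S where "S = set_pmf p"
  define h where "h z = kl_f (pmf p z / pmf q z) * pmf q z" for z
  have h_nonneg: "h z \<ge> 0" for z unfolding h_def by (intro mult_nonneg_nonneg kl_f_nonneg) auto
  have "S \<subseteq> X" "finite S" using sub X fin by (auto simp: S_def)
  have "measure_pmf.prob q X = 1"
    using X by (simp add: measure_pmf.prob_eq_1 AE_measure_pmf_iff subset_eq)
  \<comment> \<open>Off the support of \<open>p\<close> the integrand is \<open>kl_f 0 * pmf q z = pmf q z\<close>.\<close>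
  have "KL X p q = (\<integral>\<^sup>+ z. ennreal (if z \<in> S then h z else 0)
                       + ennreal (pmf q z) * indicator (X - S) z \<partial>count_space X)"
    unfolding KL_def h_def[symmetric] if_P[OF sub]
    by (intro nn_integral_cong) (auto simp: S_def h_def kl_f_def set_pmf_iff)
  also have "\<dots> = (\<integral>\<^sup>+ z. ennreal (if z \<in> S then h z else 0) \<partial>count_space X)
                  + (\<integral>\<^sup>+ z. ennreal (pmf q z) \<partial>count_space (X - S))"
    by (subst nn_integral_add)
       (auto simp: nn_integral_count_space_indicator indicator_inter_arith[symmetric]
                   Int_absorb2[OF Diff_subset] mult.assoc)
  also have "(\<integral>\<^sup>+ z. ennreal (if z \<in> S then h z else 0) \<partial>count_space X) = ennreal (\<Sum>z\<in>S. h z)"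
    using \<open>finite S\<close> \<open>S \<subseteq> X\<close> h_nonneg
    by (subst nn_integral_count_space') (auto simp: sum_ennreal)
  also have "(\<integral>\<^sup>+ z. ennreal (pmf q z) \<partial>count_space (X - S)) = ennreal (1 - (\<Sum>z\<in>S. pmf q z))"
    using \<open>measure_pmf.prob q X = 1\<close> \<open>S \<subseteq> X\<close> \<open>finite S\<close>
    by (simp add: nn_integral_pmf measure_pmf.emeasure_eq_measure measure_pmf.finite_measure_Diff
                  measure_measure_pmf_finite)
  also have "ennreal (\<Sum>z\<in>S. h z) + ennreal (1 - (\<Sum>z\<in>S. pmf q z))
             = ennreal ((\<Sum>z\<in>S. h z) + (1 - (\<Sum>z\<in>S. pmf q z)))"
    using h_nonneg sum_pmf_le_1[OF \<open>finite S\<close>, of q] by (intro ennreal_plus[symmetric] sum_nonneg) auto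
  also have "(\<Sum>z\<in>S. h z) = (\<Sum>z\<in>S. pmf p z * ln (pmf p z / pmf q z) - pmf p z + pmf q z)"
    using sub by (intro sum.cong) (auto simp: S_def h_def kl_f_def set_pmf_iff field_simps)
  also have "\<dots> + (1 - (\<Sum>z\<in>S. pmf q z)) = (\<Sum>z\<in>S. pmf p z * ln (pmf p z / pmf q z))"
    using sum_pmf_eq_1[OF \<open>finite S\<close>, of p] by (simp add: S_def sum.distrib sum_subtractf)
  finally show ?thesis by (simp add: S_def)
qed

definition simplex_KL_ball :: "nat \<Rightarrow> (nat \<Rightarrow> real) \<Rightarrow> real \<Rightarrow> (nat \<Rightarrow> real) set" where
  "simplex_KL_ball N w \<epsilon> =
     {y. (\<forall>j<N. y j > 0) \<and> (\<Sum>j<N. w j * ln (w j / y j)) \<le> \<epsilon> \<and> (\<Sum>j<N. y j) = 1}"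

definition binary_KL :: "real \<Rightarrow> real \<Rightarrow> real" where
  "binary_KL a t = a * ln (a / t) + (1 - a) * ln ((1 - a) / (1 - t))"

lemma coord_lt_1_if_sum_eq_1:
  fixes y :: "nat \<Rightarrow> real"
  assumes "k < N" "N \<noteq> 1" "\<And>j. j < N \<Longrightarrow> y j > 0" "(\<Sum>j<N. y j) = 1"
  shows "y k < 1"
proof -
  have "(if k = 0 then 1 else 0) \<in> {..<N} - {k}"
    using assms(1,2) by auto
  then have "(\<Sum>j\<in>{..<N} - {k}. y j) > 0"
    using assms(3) by (intro sum_pos) auto
  then show ?thesis
    using assms(1,4) sum.remove[of "{..<N}" k y] by simp
qed

lemma binary_KL_le_sum:
  fixes w y :: "nat \<Rightarrow> real"
  assumes "k < N" and w: "\<And>j. j < N \<Longrightarrow> w j > 0" "(\<Sum>j<N. w j) = 1"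
    and y: "\<And>j. j < N \<Longrightarrow> y j > 0" "(\<Sum>j<N. y j) = 1"
  shows "binary_KL (w k) (y k) \<le> (\<Sum>j<N. w j * ln (w j / y j))"
proof -
  define J where "J = {..<N} - {k}"
  have split: "(\<Sum>j<N. f j) = f k + (\<Sum>j\<in>J. f j)" for f :: "nat \<Rightarrow> real"
    unfolding J_def using \<open>k < N\<close> by (simp add: sum.remove)
  have "(\<Sum>j\<in>J. w j) * ln ((\<Sum>j\<in>J. w j) / (\<Sum>j\<in>J. y j)) \<le> (\<Sum>j\<in>J. w j * ln (w j / y j))"
    using w y by (intro log_sum_inequality) (auto simp: J_def)
  moreover have "(\<Sum>j\<in>J. w j) = 1 - w k" "(\<Sum>j\<in>J. y j) = 1 - y k"
    using split[of w] split[of y] w(2) y(2) by auto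
  ultimately show ?thesis
    using split[of "\<lambda>j. w j * ln (w j / y j)"] by (simp add: binary_KL_def)
qed

lemma binary_KL_sublevel_imp_simplex_KL_ball:
  assumes "k < N" "N \<noteq> 1" and w: "\<And>j. j < N \<Longrightarrow> w j > 0" "(\<Sum>j<N. w j) = 1"
    and t: "0 < t" "t < 1" "binary_KL (w k) t \<le> \<epsilon>"
  shows "(\<lambda>j. if j = k then t else (1 - t) / (1 - w k) * w j) \<in> simplex_KL_ball N w \<epsilon>"
    (is "?y \<in> _")
proof -
  define J where "J = {..<N} - {k}"
  have split: "(\<Sum>j<N. f j) = f k + (\<Sum>j\<in>J. f j)" for f :: "nat \<Rightarrow> real"
    unfolding J_def using \<open>k < N\<close> by (simp add: sum.remove)
  have W: "(\<Sum>j\<in>J. w j) = 1 - w k" "1 - w k > 0"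
    using split[of w] w coord_lt_1_if_sum_eq_1[OF \<open>k < N\<close> \<open>N \<noteq> 1\<close>, of w] by auto
  have "(\<Sum>j\<in>J. ?y j) = (1 - t) / (1 - w k) * (\<Sum>j\<in>J. w j)"
    by (auto simp: J_def sum_distrib_left intro!: sum.cong)
  then have "(\<Sum>j<N. ?y j) = 1"
    using split[of ?y] W by simp
  moreover have "w j / ?y j = (1 - w k) / (1 - t)" if "j \<in> J" for j
    using that w(1)[of j] W t by (auto simp: J_def field_simps)
  then have "(\<Sum>j\<in>J. w j * ln (w j / ?y j)) = (\<Sum>j\<in>J. w j * ln ((1 - w k) / (1 - t)))"
    by simp
  then have "(\<Sum>j<N. w j * ln (w j / ?y j)) = binary_KL (w k) t"
    using split[of "\<lambda>j. w j * ln (w j / ?y j)"] W by (simp add: binary_KL_def sum_distrib_right[symmetric])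
  ultimately show ?thesis
    using w W t by (auto simp: simplex_KL_ball_def)
qed

lemma continuous_sublevel_has_greatest:
  fixes g :: "real \<Rightarrow> real"
  assumes cont: "continuous_on {a..<b} g" and "g a \<le> \<epsilon>" "a < b"
    and ev: "eventually (\<lambda>t. \<epsilon> < g t) (at_left b)"
  shows "\<exists>t\<in>{a..<b}. g t \<le> \<epsilon> \<and> (\<forall>s\<in>{a..<b}. g s \<le> \<epsilon> \<longrightarrow> s \<le> t)"
proof -
  obtain c where "c < b" and above: "\<forall>s>c. s < b \<longrightarrow> \<epsilon> < g s"
    using ev unfolding eventually_at_left_field by blast
  define K where "K = {a..max a c} \<inter> g -` {..\<epsilon>}"
  have "closed K"
    unfolding K_def using \<open>c < b\<close> \<open>a < b\<close>
    by (intro continuous_closed_preimage continuous_on_subset[OF cont]) auto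
  then have "compact ({a..max a c} \<inter> K)"
    by (rule compact_Int_closed[OF compact_Icc])
  moreover have "{a..max a c} \<inter> K = K" by (auto simp: K_def)
  ultimately have "compact K" by simp
  moreover have "a \<in> K" using \<open>g a \<le> \<epsilon>\<close> by (simp add: K_def)
  ultimately obtain t where "t \<in> K" and t_max: "\<forall>s\<in>K. s \<le> t"
    using compact_attains_sup[of K] by auto
  have "s \<in> K" if "s \<in> {a..<b}" "g s \<le> \<epsilon>" for s
  proof -
    have "\<not> c < s" using that above by auto
    then show ?thesis using that by (simp add: K_def)
  qed
  moreover have "t \<in> {a..<b}" "g t \<le> \<epsilon>"
    using \<open>t \<in> K\<close> \<open>c < b\<close> \<open>a < b\<close> by (auto simp: K_def)
  ultimately show ?thesis using t_max by blast
qed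

lemma binary_KL_at_left_1:
  assumes "0 < a" "a < 1"
  shows "filterlim (binary_KL a) at_top (at_left 1)"
proof -
  define m where "m t = a * ln a + (1 - a) * ln (1 - a) + (1 - a) * - ln (1 - t)" for t
  have near_1: "eventually (\<lambda>t. t \<in> {0<..<1}) (at_left (1::real))"
    by (rule eventually_at_left_real) simp
  then have "filterlim (\<lambda>t. 1 - t) (at_right 0) (at_left (1::real))"
    by (intro tendsto_imp_filterlim_at_right) (auto intro!: tendsto_eq_intros elim: eventually_mono)
  then have "filterlim (\<lambda>t. - ln (1 - t)) at_top (at_left (1::real))"
    unfolding filterlim_uminus_at_top minus_minus by (rule filterlim_compose[OF ln_at_0])
  then have "filterlim m at_top (at_left 1)"
    unfolding m_def using \<open>a < 1\<close>
    by (intro filterlim_tendsto_add_at_top[OF tendsto_const]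
              filterlim_tendsto_pos_mult_at_top[OF tendsto_const]) auto
  moreover from near_1 have "eventually (\<lambda>t. m t \<le> binary_KL a t) (at_left 1)"
  proof (rule eventually_mono)
    fix t :: real assume "t \<in> {0<..<1}"
    then have "a * ln a \<le> a * ln (a / t)"
      using assms by (intro mult_left_mono) (auto simp: ln_div)
    moreover have "ln ((1 - a) / (1 - t)) = ln (1 - a) - ln (1 - t)"
      using assms \<open>t \<in> {0<..<1}\<close> by (simp add: ln_div)
    ultimately show "m t \<le> binary_KL a t"
      unfolding m_def binary_KL_def by (simp add: right_diff_distrib)
  qed
  ultimately show ?thesis by (rule filterlim_at_top_mono)
qed

lemma binary_KL_sublevel_has_greatest:
  assumes "0 < a" "a < 1" "\<epsilon> \<ge> 0"
  shows "\<exists>t\<in>{0<..<1}. binary_KL a t \<le> \<epsilon> \<and> (\<forall>s\<in>{0<..<1}. binary_KL a s \<le> \<epsilon> \<longrightarrow> s \<le> t)"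
proof -
  have "continuous_on {a..<1} (binary_KL a)"
    unfolding binary_KL_def using assms by (intro continuous_intros) auto
  moreover have "binary_KL a a \<le> \<epsilon>"
    using assms by (simp add: binary_KL_def)
  moreover have "eventually (\<lambda>t. \<epsilon> < binary_KL a t) (at_left 1)"
    using binary_KL_at_left_1[OF assms(1,2)] by (simp add: filterlim_at_top_dense)
  ultimately obtain t where "t \<in> {a..<1}" "binary_KL a t \<le> \<epsilon>"
    and t_max: "\<forall>s\<in>{a..<1}. binary_KL a s \<le> \<epsilon> \<longrightarrow> s \<le> t"
    using continuous_sublevel_has_greatest[of a 1 "binary_KL a" \<epsilon>] \<open>a < 1\<close> by auto
  moreover have "s \<le> t" if "s \<in> {0<..<1}" "binary_KL a s \<le> \<epsilon>" for s
    using that t_max \<open>t \<in> {a..<1}\<close> by (cases "a \<le> s") auto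
  ultimately show ?thesis using \<open>0 < a\<close> by auto
qed

lemma simplex_KL_ball_has_greatest_coord:
  assumes "k < N" and w: "\<And>j. j < N \<Longrightarrow> w j > 0" "(\<Sum>j<N. w j) = 1" and "\<epsilon> \<ge> 0"
  shows "\<exists>y\<in>simplex_KL_ball N w \<epsilon>. \<forall>y'\<in>simplex_KL_ball N w \<epsilon>. y' k \<le> y k"
proof (cases "N = 1")
  case True
  then have "y' k = 1" if "y' \<in> simplex_KL_ball N w \<epsilon>" for y'
    using that \<open>k < N\<close> by (simp add: simplex_KL_ball_def)
  moreover have "(\<lambda>_. 1) \<in> simplex_KL_ball N w \<epsilon>"
    using True w \<open>\<epsilon> \<ge> 0\<close> by (simp add: simplex_KL_ball_def)
  ultimately show ?thesis by fastforce
next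
  case False
  have "0 < w k" "w k < 1"
    using w \<open>k < N\<close> False coord_lt_1_if_sum_eq_1[of k N w] by auto
  then obtain t where t: "t \<in> {0<..<1}" "binary_KL (w k) t \<le> \<epsilon>"
    and t_max: "\<forall>s\<in>{0<..<1}. binary_KL (w k) s \<le> \<epsilon> \<longrightarrow> s \<le> t"
    using binary_KL_sublevel_has_greatest \<open>\<epsilon> \<ge> 0\<close> by blast
  have bound: "y' k \<le> t" if "y' \<in> simplex_KL_ball N w \<epsilon>" for y'
  proof -
    have y': "\<And>j. j < N \<Longrightarrow> y' j > 0" "(\<Sum>j<N. y' j) = 1" "(\<Sum>j<N. w j * ln (w j / y' j)) \<le> \<epsilon>"
      using that by (auto simp: simplex_KL_ball_def)
    then have "binary_KL (w k) (y' k) \<le> \<epsilon>"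
      using binary_KL_le_sum[OF \<open>k < N\<close> w y'(1,2)] by linarith
    moreover have "y' k \<in> {0<..<1}"
      using y' \<open>k < N\<close> False coord_lt_1_if_sum_eq_1[of k N y'] by auto
    ultimately show ?thesis using t_max by blast
  qed
  have "(\<lambda>j. if j = k then t else (1 - t) / (1 - w k) * w j) \<in> simplex_KL_ball N w \<epsilon>"
    using binary_KL_sublevel_imp_simplex_KL_ball[OF \<open>k < N\<close> False w] t by simp
  then show ?thesis
    using bound by (intro bexI) auto
qed

locale nominal_pmf =
  fixes X :: "'a set" and N :: nat and xh :: "nat \<Rightarrow> 'a" and w :: "nat \<Rightarrow> real" and \<nu>h :: "'a pmf"
  assumes xh_in: "\<And>j. j < N \<Longrightarrow> xh j \<in> X"
    and xh_inj: "inj_on xh {..<N}"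
    and w_pos: "\<And>j. j < N \<Longrightarrow> w j > 0"
    and w_sum: "(\<Sum>j<N. w j) = 1"
    and pmf_nominal: "\<And>z. pmf \<nu>h z = (\<Sum>j<N. if xh j = z then w j else 0)"
begin

lemma N_pos: "N > 0"
  using w_sum by (cases N) auto

lemma pmf_nominal_atom: "j < N \<Longrightarrow> pmf \<nu>h (xh j) = w j"
  using pmf_nominal sum_if_inj_on_eq[OF xh_inj] by simp

lemma set_pmf_nominal: "set_pmf \<nu>h = xh ` {..<N}"
proof (intro equalityI subsetI)
  fix z assume "z \<in> set_pmf \<nu>h"
  moreover have "pmf \<nu>h z = 0" if "z \<notin> xh ` {..<N}"
    using that unfolding pmf_nominal by (intro sum.neutral) auto
  ultimately show "z \<in> xh ` {..<N}" by (auto simp: set_pmf_iff)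
next
  fix z assume "z \<in> xh ` {..<N}"
  then obtain j where "j < N" "z = xh j" by auto
  then show "z \<in> set_pmf \<nu>h"
    using pmf_nominal_atom w_pos[of j] by (simp add: set_pmf_iff)
qed

lemma KL_nominal:
  assumes "set_pmf \<nu> \<subseteq> X" "\<And>j. j < N \<Longrightarrow> pmf \<nu> (xh j) > 0"
  shows "KL X \<nu>h \<nu> = ennreal (\<Sum>j<N. w j * ln (w j / pmf \<nu> (xh j)))"
proof -
  have "set_pmf \<nu>h \<subseteq> set_pmf \<nu>"
    using assms(2) by (force simp: set_pmf_nominal set_pmf_iff)
  then have "KL X \<nu>h \<nu> = ennreal (\<Sum>z\<in>xh ` {..<N}. pmf \<nu>h z * ln (pmf \<nu>h z / pmf \<nu> z))"
    using assms(1) by (subst KL_eq_sum_ln) (auto simp: set_pmf_nominal)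
  also have "\<dots> = ennreal (\<Sum>j<N. w j * ln (w j / pmf \<nu> (xh j)))"
    by (simp add: sum.reindex xh_inj pmf_nominal_atom)
  finally show ?thesis .
qed

lemma mem_KL_ball_iff:
  assumes "\<epsilon> \<ge> 0"
  shows "\<nu> \<in> KL_ball X \<nu>h \<epsilon> \<longleftrightarrow> set_pmf \<nu> \<subseteq> X \<and> (\<forall>j<N. pmf \<nu> (xh j) > 0) \<and>
           (\<Sum>j<N. w j * ln (w j / pmf \<nu> (xh j))) \<le> \<epsilon>"
proof (cases "\<forall>j<N. pmf \<nu> (xh j) > 0")
  case True
  then show ?thesis
    using KL_nominal assms by (auto simp: KL_ball_def pmfs_on_def ennreal_le_iff)
next
  case False
  then obtain j where "j < N" "xh j \<notin> set_pmf \<nu>"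
    by (auto simp: set_pmf_iff less_le)
  then have "KL X \<nu>h \<nu> = \<infinity>"
    by (auto simp: KL_def set_pmf_nominal)
  then show ?thesis
    using False by (simp add: KL_ball_def top_unique)
qed

lemma simplex_KL_ball_imp_KL_ball:
  assumes "\<epsilon> \<ge> 0" "y \<in> simplex_KL_ball N w \<epsilon>"
  shows "\<exists>\<nu>\<in>KL_ball X \<nu>h \<epsilon>. \<forall>j<N. pmf \<nu> (xh j) = y j"
proof -
  have y: "\<And>j. j < N \<Longrightarrow> y j > 0" "(\<Sum>j<N. y j) = 1" "(\<Sum>j<N. w j * ln (w j / y j)) \<le> \<epsilon>"
    using assms(2) by (auto simp: simplex_KL_ball_def)
  define q where "q z = (\<Sum>j<N. if xh j = z then y j else 0)" for z
  have q_atom: "q (xh j) = y j" if "j < N" for j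
    using sum_if_inj_on_eq[OF xh_inj that] by (simp add: q_def)
  have "\<exists>\<nu>. set_pmf \<nu> \<subseteq> xh ` {..<N} \<and> (\<forall>z\<in>xh ` {..<N}. pmf \<nu> z = q z)"
    using y(1,2) q_atom by (intro ex_pmf_finite_support) (auto simp: sum.reindex xh_inj less_imp_le)
  then obtain \<nu> where "set_pmf \<nu> \<subseteq> xh ` {..<N}" and "\<forall>j<N. pmf \<nu> (xh j) = y j"
    using q_atom by auto
  moreover from this have "\<nu> \<in> KL_ball X \<nu>h \<epsilon>"
    using y xh_in assms(1) by (auto simp: mem_KL_ball_iff)
  ultimately show ?thesis by blast
qed

lemma KL_ball_imp_simplex_KL_ball:
  assumes "\<epsilon> \<ge> 0" "\<nu> \<in> KL_ball X \<nu>h \<epsilon>"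
  shows "\<exists>y\<in>simplex_KL_ball N w \<epsilon>. \<forall>j<N. pmf \<nu> (xh j) \<le> y j"
proof -
  have pos: "\<And>j. j < N \<Longrightarrow> pmf \<nu> (xh j) > 0"
    and KL_le: "(\<Sum>j<N. w j * ln (w j / pmf \<nu> (xh j))) \<le> \<epsilon>"
    using assms by (auto simp: mem_KL_ball_iff)
  define s where "s = (\<Sum>j<N. pmf \<nu> (xh j))"
  have "0 < s" unfolding s_def using pos N_pos by (intro sum_pos) auto
  moreover have "s \<le> 1"
    using sum_pmf_le_1[of "xh ` {..<N}" \<nu>] by (simp add: s_def sum.reindex xh_inj)
  moreover have "(\<Sum>j<N. w j * ln (w j / (pmf \<nu> (xh j) / s)))
                 = (\<Sum>j<N. w j * ln (w j / pmf \<nu> (xh j))) + ln s"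
  proof -
    have "w j * ln (w j / (pmf \<nu> (xh j) / s)) = w j * ln (w j / pmf \<nu> (xh j)) + w j * ln s"
      if "j < N" for j
      using pos[OF that] w_pos[OF that] \<open>0 < s\<close> by (simp add: ln_div ln_mult algebra_simps)
    then show ?thesis
      by (simp add: sum.distrib sum_distrib_right[symmetric] w_sum)
  qed
  moreover have "ln s \<le> 0" using \<open>0 < s\<close> \<open>s \<le> 1\<close> by simp
  ultimately have "(\<Sum>j<N. w j * ln (w j / (pmf \<nu> (xh j) / s))) \<le> \<epsilon>"
    using KL_le by linarith
  then have "(\<lambda>j. pmf \<nu> (xh j) / s) \<in> simplex_KL_ball N w \<epsilon>"
    using pos \<open>0 < s\<close> by (simp add: simplex_KL_ball_def s_def sum_divide_distrib[symmetric])
  moreover have "pmf \<nu> (xh j) \<le> pmf \<nu> (xh j) / s" for j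
    using \<open>0 < s\<close> \<open>s \<le> 1\<close> by (simp add: le_divide_eq mult_left_le)
  ultimately show ?thesis by (intro bexI) auto
qed

lemma SUP_KL_ball_atom:
  assumes "\<epsilon> \<ge> 0" "k < N" "y \<in> simplex_KL_ball N w \<epsilon>"
    and y_max: "\<forall>y'\<in>simplex_KL_ball N w \<epsilon>. y' k \<le> y k"
  shows "(SUP \<nu>\<in>KL_ball X \<nu>h \<epsilon>. pmf \<nu> (xh k)) = y k"
proof (rule cSup_eq_maximum)
  show "y k \<in> (\<lambda>\<nu>. pmf \<nu> (xh k)) ` KL_ball X \<nu>h \<epsilon>"
    using simplex_KL_ball_imp_KL_ball[OF assms(1,3)] \<open>k < N\<close> by force
  show "p \<le> y k" if "p \<in> (\<lambda>\<nu>. pmf \<nu> (xh k)) ` KL_ball X \<nu>h \<epsilon>" for p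
    using that KL_ball_imp_simplex_KL_ball[OF assms(1)] y_max \<open>k < N\<close> by (fastforce intro: order_trans)
qed

lemma mixture_in_KL_ball:
  assumes "\<epsilon> \<ge> 0" "x \<in> X" "x \<notin> set_pmf \<nu>h"
  shows "bind_pmf (bernoulli_pmf (exp (- \<epsilon>))) (\<lambda>b. if b then \<nu>h else return_pmf x) \<in> KL_ball X \<nu>h \<epsilon>"
    (is "?\<nu> \<in> _")
proof -
  have pmf_mix: "pmf ?\<nu> z = exp (- \<epsilon>) * pmf \<nu>h z + (1 - exp (- \<epsilon>)) * indicator {z} x" for z
    using assms(1) by (simp add: pmf_bind)
  have atom: "pmf ?\<nu> (xh j) = exp (- \<epsilon>) * w j" if "j < N" for j
  proof -
    have "x \<noteq> xh j" using that assms(3) by (auto simp: set_pmf_nominal)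
    then show ?thesis using that by (simp add: pmf_mix pmf_nominal_atom)
  qed
  have term_eq: "w j * ln (w j / pmf ?\<nu> (xh j)) = w j * \<epsilon>" if "j < N" for j
    using w_pos[OF that] by (simp add: atom[OF that] ln_div ln_mult)
  have "(\<Sum>j<N. w j * ln (w j / pmf ?\<nu> (xh j))) = (\<Sum>j<N. w j) * \<epsilon>"
    unfolding sum_distrib_right by (rule sum.cong) (simp_all add: term_eq)
  then have "(\<Sum>j<N. w j * ln (w j / pmf ?\<nu> (xh j))) = \<epsilon>"
    by (simp add: w_sum)
  moreover have "set_pmf ?\<nu> \<subseteq> X"
    using assms(2) xh_in by (auto simp: set_pmf_nominal split: if_splits)
  ultimately show ?thesis
    using assms(1) w_pos by (simp add: mem_KL_ball_iff atom)
qed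

lemma pmf_off_support_le:
  assumes "\<epsilon> \<ge> 0" "\<nu> \<in> KL_ball X \<nu>h \<epsilon>" "x \<notin> set_pmf \<nu>h"
  shows "pmf \<nu> x \<le> 1 - exp (- \<epsilon>)"
proof -
  have pos: "\<And>j. j < N \<Longrightarrow> pmf \<nu> (xh j) > 0"
    and KL_le: "(\<Sum>j<N. w j * ln (w j / pmf \<nu> (xh j))) \<le> \<epsilon>"
    using assms by (auto simp: mem_KL_ball_iff)
  define s where "s = (\<Sum>j<N. pmf \<nu> (xh j))"
  have "0 < s" unfolding s_def using pos N_pos by (intro sum_pos) auto
  have "- ln s \<le> \<epsilon>"
    using log_sum_inequality[of "{..<N}" w "\<lambda>j. pmf \<nu> (xh j)"] w_pos pos KL_le \<open>0 < s\<close>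
    by (simp add: w_sum s_def ln_div)
  then have "exp (- \<epsilon>) \<le> s"
    using \<open>0 < s\<close> by (metis exp_le_cancel_iff exp_ln minus_le_iff)
  moreover have "pmf \<nu> x + s \<le> 1"
    using sum_pmf_le_1[of "insert x (xh ` {..<N})" \<nu>] assms(3)
    by (simp add: s_def sum.reindex xh_inj set_pmf_nominal)
  ultimately show ?thesis by simp
qed

lemma SUP_KL_ball_off_support:
  assumes "\<epsilon> \<ge> 0" "x \<in> X" "x \<notin> set_pmf \<nu>h"
  shows "(SUP \<nu>\<in>KL_ball X \<nu>h \<epsilon>. pmf \<nu> x) = 1 - exp (- \<epsilon>)"
proof (rule cSup_eq_maximum)
  have "pmf (bind_pmf (bernoulli_pmf (exp (- \<epsilon>))) (\<lambda>b. if b then \<nu>h else return_pmf x)) x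
        = 1 - exp (- \<epsilon>)"
    using assms(1,3) by (simp add: pmf_bind set_pmf_iff)
  then show "1 - exp (- \<epsilon>) \<in> (\<lambda>\<nu>. pmf \<nu> x) ` KL_ball X \<nu>h \<epsilon>"
    using mixture_in_KL_ball[OF assms] by (metis image_eqI)
  show "p \<le> 1 - exp (- \<epsilon>)" if "p \<in> (\<lambda>\<nu>. pmf \<nu> x) ` KL_ball X \<nu>h \<epsilon>" for p
    using that pmf_off_support_le[OF assms(1) _ assms(3)] by blast
qed

end

theorem mainTheorem3:
  fixes X :: "(real ^ 'm) set"
    and N :: nat
    and xh :: "nat \<Rightarrow> real ^ 'm"
    and w :: "nat \<Rightarrow> real"
    and \<nu>h :: "(real ^ 'm) pmf"
    and \<epsilon> :: real
    and x :: "real ^ 'm"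
  assumes countX: "countable X"
    and xh_in: "\<And>j. j < N \<Longrightarrow> xh j \<in> X"
    and xh_distinct: "inj_on xh {..<N}"
    and w_pos: "\<And>j. j < N \<Longrightarrow> w j > 0"
    and w_sum: "(\<Sum>j<N. w j) = 1"
    and \<nu>h_def: "\<And>z. pmf \<nu>h z = (\<Sum>j<N. if xh j = z then w j else 0)"
    and eps: "\<epsilon> \<ge> 0"
    and x_in: "x \<in> X"
  shows
    "(x \<in> set_pmf \<nu>h \<longrightarrow>
       (\<exists>y. (\<forall>j<N. y j > 0) \<and> (\<Sum>j<N. w j * ln (w j / y j)) \<le> \<epsilon> \<and> (\<Sum>j<N. y j) = 1 \<and>
            (\<Sum>j<N. y j * (if xh j = x then 1 else 0)) = (SUP \<nu>\<in>KL_ball X \<nu>h \<epsilon>. pmf \<nu> x) \<and>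
            (\<forall>y'. (\<forall>j<N. y' j > 0) \<and> (\<Sum>j<N. w j * ln (w j / y' j)) \<le> \<epsilon> \<and> (\<Sum>j<N. y' j) = 1
                 \<longrightarrow> (\<Sum>j<N. y' j * (if xh j = x then 1 else 0)) \<le> (\<Sum>j<N. y j * (if xh j = x then 1 else 0)))))
     \<and>
     (x \<notin> set_pmf \<nu>h \<longrightarrow>
       (SUP \<nu>\<in>KL_ball X \<nu>h \<epsilon>. pmf \<nu> x) = 1 - exp (- \<epsilon>))"
proof -
  interpret nominal_pmf X N xh w \<nu>h
    using xh_in xh_distinct w_pos w_sum \<nu>h_def by unfold_locales
  show ?thesis
  proof (cases "x \<in> set_pmf \<nu>h")
    case True
    then obtain k where "k < N" "x = xh k"
      by (auto simp: set_pmf_nominal)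
    have pick: "(\<Sum>j<N. y j * (if xh j = xh k then 1 else 0)) = y k" for y :: "nat \<Rightarrow> real"
      using sum_if_inj_on_eq[OF xh_distinct \<open>k < N\<close>, of y] by (simp add: if_distrib cong: if_cong)
    obtain y where "y \<in> simplex_KL_ball N w \<epsilon>" and y_max: "\<forall>y'\<in>simplex_KL_ball N w \<epsilon>. y' k \<le> y k"
      using simplex_KL_ball_has_greatest_coord[OF \<open>k < N\<close> w_pos w_sum eps] by blast
    moreover have "(SUP \<nu>\<in>KL_ball X \<nu>h \<epsilon>. pmf \<nu> (xh k)) = y k"
      using SUP_KL_ball_atom[OF eps \<open>k < N\<close> \<open>y \<in> _\<close> y_max] .
    ultimately show ?thesis
      using True unfolding \<open>x = xh k\<close> pick by (auto simp: simplex_KL_ball_def)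
  next
    case False
    then show ?thesis
      using SUP_KL_ball_off_support[OF eps x_in] by simp
  qed
qed

end
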